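(* Consider any of the three variants (F, O, T) of the two-round protocol described in the context, with parameters $\epsilon_1,\epsilon_2\ge 0$, $d_{max}\in\mathbb Z_{\ge0}$, $\mu\in[0,\frac{e^{\epsilon_1}}{e^{\epsilon_1}+1}]$, where all neighbor lists considered have at most $d_{max}$ ones. For $i\in[n]$ let $\mathcal R_i^1$ be the first-round randomizer of $v_i$ (mapping $\mathbf a_i$ to $\mathbf r_i$) and $\mathcal R_i^2(M_i)$ the second-round randomizer (mapping $\mathbf a_i$ to $\hat w_i$, given the message $M_i$), and let $\mathcal R_i(\mathbf a_i)=(\mathcal R_i^1(\mathbf a_i),\mathcal R_i^2(M_i)(\mathbf a_i))$. Then each $\mathcal R_i$ satisfies $(\epsilon_1+\epsilon_2)$-edge LDP, and $(\mathcal R_1,\dots,\mathcal R_n)$ satisfies $(\epsilon_1+\epsilon_2)$-relationship DP.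
   Context: Let $G$ be a simple undirected graph on $V=\{v_1,\dots,v_n\}$ with symmetric adjacency matrix $\mathbf A=(a_{i,j})\in\{0,1\}^{n\times n}$, $a_{i,i}=0$; $\mathbf a_i$ is the $i$-th row (neighbor list of $v_i$). $ARR_{\epsilon,\mu}:\{0,1\}\to\{0,1\}$ is the randomized map with $\Pr[ARR_{\epsilon,\mu}(1)=1]=\mu$ and $\Pr[ARR_{\epsilon,\mu}(0)=1]=\mu e^{-\epsilon}$. Protocol: let $\rho=e^{-\epsilon_1}$ and $\mu^*=\mu,\mu^2,\mu^3$ in variants F, O, T respectively. Round 1: each $v_i$ computes $r_{i,j}=ARR_{\epsilon_1,\mu}(a_{i,j})$ for all $j<i$ (all independent) and sends $\mathbf r_i=(r_{i,1},\dots,r_{i,i-1})$. The server forms the set of unordered pairs $E'=\{\{v_j,v_k\}: j<k,\ r_{k,j}=1\}$. Round 2: the server sends $v_i$ the message $M_i=\{\{v_j,v_k\}\in E': j<k<i\}$ (F), $M_i=\{\{v_j,v_k\}\in E':\{v_i,v_k\}\in E',\ j<k<i\}$ (O), or $M_i=\{\{v_j,v_k\}\in E':\{v_i,v_j\}\in E',\{v_i,v_k\}\in E',\ j<k<i\}$ (T). User $v_i$ computes $t_i=|\{(j,k):j<k<i,\ a_{i,j}=a_{i,k}=1,\ \{v_j,v_k\}\in M_i\}|$, $s_i=|\{(j,k):j<k<i,\ a_{i,j}=a_{i,k}=1\}|$, $w_i=t_i-\mu^*\rho s_i$, and sends $\hat w_i=w_i+\mathrm{Lap}(d_{max}/\epsilon_2)$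 (Laplace noise with mean 0 and scale $d_{max}/\epsilon_2$, independent). The server outputs $\hat f_\triangle(G)=\frac{1}{\mu^*(1-\rho)}\sum_{i=1}^n\hat w_i$. Definitions: a local randomizer $\mathcal R$ on $\{0,1\}^n$ satisfies $\epsilon$-edge LDP if $\Pr[\mathcal R(\mathbf a)=s]\le e^\epsilon\Pr[\mathcal R(\mathbf a')=s]$ for all $\mathbf a,\mathbf a'$ differing in one bit and all outputs $s$. A tuple $(\mathcal R_1,\dots,\mathcal R_n)$ (independent randomness) satisfies $\epsilon$-relationship DP if for all graphs $G,G'$ on $V$ differing in exactly one edge, with adjacency rows $\mathbf a_i,\mathbf a_i'$, and all output tuples $(s_1,\dots,s_n)$, $\Pr[(\mathcal R_1(\mathbf a_1),\dots,\mathcal R_n(\mathbf a_n))=(s_1,\dots,s_n)]\le e^\epsilon\Pr[(\mathcal R_1(\mathbf a_1'),\dots,\mathcal R_n(\mathbf a_n'))=(s_1,\dots,s_n)]$. *)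

theory Defs
  imports "HOL-Probability.Probability"
begin

text \<open>Vertices are v_0, ..., v_(n-1) (0-indexed). A neighbor list of a user is a
  function ai :: nat => bool (only indices below n are meaningful).
  Pairs {v_j, v_k} with j < k are encoded as ordered pairs (j, k).\<close>

datatype variant = VarF | VarO | VarT

definition mu_star :: "variant \<Rightarrow> real \<Rightarrow> real" where
  "mu_star v \<mu> = (case v of VarF \<Rightarrow> \<mu> | VarO \<Rightarrow> \<mu>^2 | VarT \<Rightarrow> \<mu>^3)"

definition ARR :: "real \<Rightarrow> real \<Rightarrow> bool \<Rightarrow> bool pmf" where
  "ARR eps \<mu> b = bernoulli_pmf (if b then \<mu> else \<mu> * exp (- eps))"

definition laplace :: "real \<Rightarrow> real measure" where
  "laplace b = (if b = 0 then return borel 0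
     else density lborel (\<lambda>x. ennreal (exp (- \<bar>x\<bar> / b) / (2 * b))))"

definition round1 :: "real \<Rightarrow> real \<Rightarrow> nat \<Rightarrow> (nat \<Rightarrow> bool) \<Rightarrow> (nat \<Rightarrow> bool) pmf" where
  "round1 eps1 \<mu> i ai = Pi_pmf {..<i} False (\<lambda>j. ARR eps1 \<mu> (ai j))"

text \<open>Noisy-graph edge set E' from the round-1 reports r (r k j = r_(k,j)).\<close>
definition noisy_edges :: "nat \<Rightarrow> (nat \<Rightarrow> nat \<Rightarrow> bool) \<Rightarrow> (nat \<times> nat) set" where
  "noisy_edges n r = {(j, k). j < k \<and> k < n \<and> r k j}"

definition message :: "variant \<Rightarrow> nat \<Rightarrow> (nat \<times> nat) set \<Rightarrow> (nat \<times> nat) set" where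
  "message v i E' = (case v of
      VarF \<Rightarrow> {(j, k). (j, k) \<in> E' \<and> j < k \<and> k < i}
    | VarO \<Rightarrow> {(j, k). (j, k) \<in> E' \<and> (k, i) \<in> E' \<and> j < k \<and> k < i}
    | VarT \<Rightarrow> {(j, k). (j, k) \<in> E' \<and> (j, i) \<in> E' \<and> (k, i) \<in> E' \<and> j < k \<and> k < i})"

definition t_count :: "nat \<Rightarrow> (nat \<Rightarrow> bool) \<Rightarrow> (nat \<times> nat) set \<Rightarrow> nat" where
  "t_count i ai M = card {(j, k). j < k \<and> k < i \<and> ai j \<and> ai k \<and> (j, k) \<in> M}"

definition s_count :: "nat \<Rightarrow> (nat \<Rightarrow> bool) \<Rightarrow> nat" where
  "s_count i ai = card {(j, k). j < k \<and> k < i \<and> ai j \<and> ai k}"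

definition w_val :: "variant \<Rightarrow> real \<Rightarrow> real \<Rightarrow> nat \<Rightarrow> (nat \<Rightarrow> bool) \<Rightarrow> (nat \<times> nat) set \<Rightarrow> real" where
  "w_val v eps1 \<mu> i ai M =
     real (t_count i ai M) - mu_star v \<mu> * exp (- eps1) * real (s_count i ai)"

definition round2 :: "variant \<Rightarrow> real \<Rightarrow> real \<Rightarrow> real \<Rightarrow> nat \<Rightarrow> nat \<Rightarrow> (nat \<times> nat) set
    \<Rightarrow> (nat \<Rightarrow> bool) \<Rightarrow> real measure" where
  "round2 v eps1 eps2 \<mu> dmax i M ai =
     distr (laplace (real dmax / eps2)) borel (\<lambda>x. w_val v eps1 \<mu> i ai M + x)"

definition user_rand :: "variant \<Rightarrow> real \<Rightarrow> real \<Rightarrow> real \<Rightarrow> nat \<Rightarrow> nat \<Rightarrow> (nat \<times> nat) set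
    \<Rightarrow> (nat \<Rightarrow> bool) \<Rightarrow> ((nat \<Rightarrow> bool) \<times> real) measure" where
  "user_rand v eps1 eps2 \<mu> dmax i M ai =
     measure_pmf (round1 eps1 \<mu> i ai) \<Otimes>\<^sub>M round2 v eps1 eps2 \<mu> dmax i M ai"

definition protocol :: "variant \<Rightarrow> real \<Rightarrow> real \<Rightarrow> real \<Rightarrow> nat \<Rightarrow> nat \<Rightarrow> (nat \<Rightarrow> nat \<Rightarrow> bool)
    \<Rightarrow> ((nat \<Rightarrow> nat \<Rightarrow> bool) \<times> (nat \<Rightarrow> real)) measure" where
  "protocol v eps1 eps2 \<mu> dmax n A =
     measure_pmf (Pi_pmf {..<n} (\<lambda>_. False) (\<lambda>i. round1 eps1 \<mu> i (A i))) \<bind>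
       (\<lambda>r. distr (PiM {..<n} (\<lambda>i. round2 v eps1 eps2 \<mu> dmax i
                                 (message v i (noisy_edges n r)) (A i)))
                   (count_space UNIV \<Otimes>\<^sub>M PiM {..<n} (\<lambda>_. borel))
                   (\<lambda>w. (r, w)))"

definition rows_differ_one :: "nat \<Rightarrow> (nat \<Rightarrow> bool) \<Rightarrow> (nat \<Rightarrow> bool) \<Rightarrow> bool" where
  "rows_differ_one n a a' =
     (\<exists>k<n. a k \<noteq> a' k \<and> (\<forall>j<n. j \<noteq> k \<longrightarrow> a j = a' j))"

definition edge_LDP :: "nat \<Rightarrow> real \<Rightarrow> (nat \<Rightarrow> bool) set \<Rightarrow> ((nat \<Rightarrow> bool) \<Rightarrow> 'b measure) \<Rightarrow> bool" where
  "edge_LDP n eps D R =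
     (\<forall>a\<in>D. \<forall>a'\<in>D. rows_differ_one n a a' \<longrightarrow>
        (\<forall>S \<in> sets (R a). measure (R a) S \<le> exp eps * measure (R a') S))"

definition simple_graph :: "nat \<Rightarrow> (nat \<Rightarrow> nat \<Rightarrow> bool) \<Rightarrow> bool" where
  "simple_graph n A = (\<forall>i<n. \<forall>j<n. A i j = A j i \<and> \<not> A i i)"

definition max_deg_le :: "nat \<Rightarrow> nat \<Rightarrow> (nat \<Rightarrow> nat \<Rightarrow> bool) \<Rightarrow> bool" where
  "max_deg_le n dmax A = (\<forall>i<n. card {j. j < n \<and> A i j} \<le> dmax)"

definition graphs_differ_one_edge :: "nat \<Rightarrow> (nat \<Rightarrow> nat \<Rightarrow> bool) \<Rightarrow> (nat \<Rightarrow> nat \<Rightarrow> bool) \<Rightarrow> bool" where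
  "graphs_differ_one_edge n A A' =
     (\<exists>u<n. \<exists>w<n. u \<noteq> w \<and> A u w \<noteq> A' u w \<and>
        (\<forall>i<n. \<forall>j<n. {i, j} \<noteq> {u, w} \<longrightarrow> A i j = A' i j))"

definition relationship_DP :: "nat \<Rightarrow> nat \<Rightarrow> real \<Rightarrow> ((nat \<Rightarrow> nat \<Rightarrow> bool) \<Rightarrow> 'b measure) \<Rightarrow> bool" where
  "relationship_DP n dmax eps P =
     (\<forall>A A'. simple_graph n A \<and> simple_graph n A' \<and> max_deg_le n dmax A \<and> max_deg_le n dmax A'
        \<and> graphs_differ_one_edge n A A' \<longrightarrow>
        (\<forall>S \<in> sets (P A). measure (P A) S \<le> exp eps * measure (P A') S))"

end

theory Submission
  imports Defs
begin

text \<open>Both claims reduce to the multiplicative bound  emeasure M A \<le> c * emeasure N A  for all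
  events A, which survives pushforwards, products in which a single factor changes, and binding a
  pmf against a kernel. Flipping one bit of a neighbor list changes the first-round report by
  asymmetric randomized response, whose probabilities differ by at most a factor e^eps1 precisely
  because mu \<le> e^eps1 / (e^eps1 + 1). It shifts w_i by at most dmax, since only the pairs
  containing the flipped index are affected and each is determined by its other endpoint, a
  neighbor; Laplace noise of scale dmax / eps2 turns that shift into a factor e^eps2. For
  relationship DP, an edge enters the lower-triangular reports, and hence the w values, only
  through the row of its larger endpoint, while the messages M_i depend on the reports alone and
  are integrated out by the bind.\<close>

definition emeasure_le_scaled :: "real \<Rightarrow> 'a measure \<Rightarrow> 'a measure \<Rightarrow> bool" where
  "emeasure_le_scaled c M N \<longleftrightarrow>
     sets M = sets N \<and> (\<forall>A\<in>sets M. emeasure M A \<le> ennreal c * emeasure N A)"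

lemma emeasure_le_scaledI:
  assumes "sets M = sets N" "\<And>A. A \<in> sets M \<Longrightarrow> emeasure M A \<le> ennreal c * emeasure N A"
  shows "emeasure_le_scaled c M N"
  using assms by (simp add: emeasure_le_scaled_def)

lemma emeasure_le_scaledD:
  assumes "emeasure_le_scaled c M N"
  shows "sets M = sets N" "A \<in> sets M \<Longrightarrow> emeasure M A \<le> ennreal c * emeasure N A"
  using assms by (auto simp: emeasure_le_scaled_def)

lemma emeasure_le_scaled_refl:
  assumes "c \<ge> 1"
  shows "emeasure_le_scaled c M M"
proof (rule emeasure_le_scaledI)
  fix A
  have "emeasure M A = 1 * emeasure M A" by simp
  also have "\<dots> \<le> ennreal c * emeasure M A"
    using assms by (intro mult_right_mono) (auto simp: ennreal_1[symmetric] simp del: ennreal_1)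
  finally show "emeasure M A \<le> ennreal c * emeasure M A" .
qed simp

lemma emeasure_le_scaled_trans:
  assumes "c \<ge> 0" "d \<ge> 0" "emeasure_le_scaled c M N" "emeasure_le_scaled d N K"
  shows "emeasure_le_scaled (c * d) M K"
proof (rule emeasure_le_scaledI)
  show "sets M = sets K" using assms(3,4) by (simp add: emeasure_le_scaled_def)
  fix A assume A: "A \<in> sets M"
  have "emeasure M A \<le> ennreal c * emeasure N A" using assms(3) A by (rule emeasure_le_scaledD)
  also have "\<dots> \<le> ennreal c * (ennreal d * emeasure K A)"
    using assms(3,4) A by (intro mult_left_mono) (auto simp: emeasure_le_scaled_def)
  finally show "emeasure M A \<le> ennreal (c * d) * emeasure K A"
    using assms(1,2) by (simp add: ennreal_mult mult.assoc)
qed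

lemma measure_le_scaled:
  assumes "emeasure_le_scaled c M N" "c \<ge> 0" "finite_measure N" "A \<in> sets M"
  shows "measure M A \<le> c * measure N A"
proof -
  have le: "emeasure M A \<le> ennreal c * emeasure N A" using assms(1,4) by (rule emeasure_le_scaledD)
  have "emeasure N A < \<top>"
    using assms(3) by (simp add: finite_measure.emeasure_finite less_top[symmetric])
  hence "enn2real (emeasure M A) \<le> enn2real (ennreal c * emeasure N A)"
    using le by (intro enn2real_mono) (auto simp: ennreal_mult_less_top)
  thus ?thesis using assms(2) by (simp add: enn2real_mult measure_def)
qed

lemma emeasure_le_scaled_distr:
  assumes "emeasure_le_scaled c M N" "f \<in> measurable M K"
  shows "emeasure_le_scaled c (distr M K f) (distr N K f)"
proof (rule emeasure_le_scaledI)
  have sets: "sets M = sets N" using assms(1) by (rule emeasure_le_scaledD)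
  have f': "f \<in> measurable N K" using assms(2) sets by (simp cong: measurable_cong_sets)
  fix A assume "A \<in> sets (distr M K f)"
  hence A: "A \<in> sets K" by simp
  have "f -` A \<inter> space N = f -` A \<inter> space M" using sets_eq_imp_space_eq[OF sets] by simp
  thus "emeasure (distr M K f) A \<le> ennreal c * emeasure (distr N K f) A"
    using emeasure_le_scaledD(2)[OF assms(1) measurable_sets[OF assms(2) A]]
    by (simp add: emeasure_distr[OF assms(2) A] emeasure_distr[OF f' A])
qed simp

lemma emeasure_le_scaled_density:
  assumes [measurable]: "f \<in> borel_measurable M" "g \<in> borel_measurable M"
    and "\<And>x. f x \<le> ennreal c * g x"
  shows "emeasure_le_scaled c (density M f) (density M g)"
proof (rule emeasure_le_scaledI)
  fix A assume "A \<in> sets (density M f)"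
  hence [measurable]: "A \<in> sets M" by simp
  have "(\<integral>\<^sup>+x. f x * indicator A x \<partial>M) \<le> (\<integral>\<^sup>+x. ennreal c * (g x * indicator A x) \<partial>M)"
    using assms(3) by (intro nn_integral_mono) (auto simp: indicator_def)
  also have "\<dots> = ennreal c * (\<integral>\<^sup>+x. g x * indicator A x \<partial>M)"
    by (rule nn_integral_cmult) simp
  finally show "emeasure (density M f) A \<le> ennreal c * emeasure (density M g) A"
    by (simp add: emeasure_density)
qed simp

lemma emeasure_le_scaled_pair_measure_left:
  assumes le: "emeasure_le_scaled c M N"
    and "sigma_finite_measure M" "sigma_finite_measure N" "sigma_finite_measure K"
  shows "emeasure_le_scaled c (M \<Otimes>\<^sub>M K) (N \<Otimes>\<^sub>M K)"
proof (rule emeasure_le_scaledI)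
  interpret MK: pair_sigma_finite M K using assms(2,4) by (simp add: pair_sigma_finite_def)
  interpret NK: pair_sigma_finite N K using assms(3,4) by (simp add: pair_sigma_finite_def)
  have sets: "sets M = sets N" using le by (rule emeasure_le_scaledD)
  show sets_pair: "sets (M \<Otimes>\<^sub>M K) = sets (N \<Otimes>\<^sub>M K)" using sets by (intro sets_pair_measure_cong) auto
  fix S assume S: "S \<in> sets (M \<Otimes>\<^sub>M K)"
  have "emeasure (M \<Otimes>\<^sub>M K) S = (\<integral>\<^sup>+y. emeasure M ((\<lambda>x. (x, y)) -` S) \<partial>K)"
    by (rule MK.emeasure_pair_measure_alt2[OF S])
  also have "\<dots> \<le> (\<integral>\<^sup>+y. ennreal c * emeasure N ((\<lambda>x. (x, y)) -` S) \<partial>K)"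
    by (intro nn_integral_mono emeasure_le_scaledD(2)[OF le] sets_Pair2[OF S])
  also have "\<dots> = ennreal c * (\<integral>\<^sup>+y. emeasure N ((\<lambda>x. (x, y)) -` S) \<partial>K)"
    using S sets_pair by (intro nn_integral_cmult NK.measurable_emeasure_Pair2) auto
  also have "\<dots> = ennreal c * emeasure (N \<Otimes>\<^sub>M K) S"
    using S sets_pair by (simp add: NK.emeasure_pair_measure_alt2)
  finally show "emeasure (M \<Otimes>\<^sub>M K) S \<le> ennreal c * emeasure (N \<Otimes>\<^sub>M K) S" .
qed

lemma emeasure_le_scaled_pair_measure_right:
  assumes le: "emeasure_le_scaled c M N"
    and "sigma_finite_measure K" "sigma_finite_measure M" "sigma_finite_measure N"
  shows "emeasure_le_scaled c (K \<Otimes>\<^sub>M M) (K \<Otimes>\<^sub>M N)"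
proof (rule emeasure_le_scaledI)
  interpret KM: pair_sigma_finite K M using assms(2,3) by (simp add: pair_sigma_finite_def)
  interpret KN: pair_sigma_finite K N using assms(2,4) by (simp add: pair_sigma_finite_def)
  have sets: "sets M = sets N" using le by (rule emeasure_le_scaledD)
  show sets_pair: "sets (K \<Otimes>\<^sub>M M) = sets (K \<Otimes>\<^sub>M N)" using sets by (intro sets_pair_measure_cong) auto
  fix S assume S: "S \<in> sets (K \<Otimes>\<^sub>M M)"
  have "emeasure (K \<Otimes>\<^sub>M M) S = (\<integral>\<^sup>+x. emeasure M (Pair x -` S) \<partial>K)"
    by (rule KM.M2.emeasure_pair_measure_alt[OF S])
  also have "\<dots> \<le> (\<integral>\<^sup>+x. ennreal c * emeasure N (Pair x -` S) \<partial>K)"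
    by (intro nn_integral_mono emeasure_le_scaledD(2)[OF le] sets_Pair1[OF S])
  also have "\<dots> = ennreal c * (\<integral>\<^sup>+x. emeasure N (Pair x -` S) \<partial>K)"
    using S sets_pair by (intro nn_integral_cmult KN.measurable_emeasure_Pair1) auto
  also have "\<dots> = ennreal c * emeasure (K \<Otimes>\<^sub>M N) S"
    using S sets_pair by (simp add: KN.M2.emeasure_pair_measure_alt)
  finally show "emeasure (K \<Otimes>\<^sub>M M) S \<le> ennreal c * emeasure (K \<Otimes>\<^sub>M N) S" .
qed

lemma emeasure_le_scaled_PiM_single:
  assumes k: "k \<in> I"
    and prob: "\<And>i. i \<in> I \<Longrightarrow> prob_space (M i)" "\<And>i. i \<in> I \<Longrightarrow> prob_space (N i)"
    and eq: "\<And>i. i \<in> I \<Longrightarrow> i \<noteq> k \<Longrightarrow> M i = N i"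
    and le: "emeasure_le_scaled c (M k) (N k)"
  shows "emeasure_le_scaled c (PiM I M) (PiM I N)"
proof -
  define J where "J = I - {k}"
  have I: "I = insert k J" using k by (auto simp: J_def)
  have same_rest: "PiM J N = PiM J M" using eq by (intro PiM_cong) (auto simp: J_def)
  have prob_rest: "prob_space (PiM J M)" using prob by (intro prob_space_PiM) (auto simp: J_def)
  have sets_k: "sets (M k) = sets (N k)" using le by (rule emeasure_le_scaledD)
  let ?ins = "\<lambda>(x, X). X(k := x)"
  have ins: "?ins \<in> measurable (M k \<Otimes>\<^sub>M PiM J M) (PiM I M)"
    unfolding I using measurable_comp[OF measurable_pair_swap' measurable_add_dim[of k J M]]
    by (simp add: o_def case_prod_beta)
  have "sets (M i) = sets (N i)" if "i \<in> I" for i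
    using eq[OF that] sets_k by (cases "i = k") auto
  hence sets_Pi: "sets (PiM I M) = sets (PiM I N)" by (intro sets_PiM_cong) auto
  have "emeasure_le_scaled c (M k \<Otimes>\<^sub>M PiM J M) (N k \<Otimes>\<^sub>M PiM J M)"
    using prob k prob_rest
    by (intro emeasure_le_scaled_pair_measure_left le prob_space_imp_sigma_finite) auto
  hence "emeasure_le_scaled c (distr (M k \<Otimes>\<^sub>M PiM J M) (PiM I M) ?ins)
                              (distr (N k \<Otimes>\<^sub>M PiM J M) (PiM I M) ?ins)"
    using ins by (rule emeasure_le_scaled_distr)
  moreover have "distr (M k \<Otimes>\<^sub>M PiM J M) (PiM I M) ?ins = PiM I M"
    using distr_pair_PiM_eq_PiM[of J M k] prob k unfolding I by (auto simp: J_def)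
  moreover have "distr (N k \<Otimes>\<^sub>M PiM J M) (PiM I M) ?ins = PiM I N"
    using distr_pair_PiM_eq_PiM[of J N k] prob k sets_Pi unfolding I same_rest[symmetric]
    by (auto simp: J_def cong: distr_cong)
  ultimately show ?thesis by simp
qed

lemma nn_integral_measure_pmf_le_scaled:
  assumes "c \<ge> 0" "\<And>x. pmf p x \<le> c * pmf q x"
  shows "(\<integral>\<^sup>+x. f x \<partial>measure_pmf p) \<le> ennreal c * (\<integral>\<^sup>+x. f x \<partial>measure_pmf q)"
proof -
  have "(\<integral>\<^sup>+x. f x \<partial>measure_pmf p) = (\<integral>\<^sup>+x. ennreal (pmf p x) * f x \<partial>count_space UNIV)"
    by (rule nn_integral_measure_pmf)
  also have "\<dots> \<le> (\<integral>\<^sup>+x. ennreal c * (ennreal (pmf q x) * f x) \<partial>count_space UNIV)"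
  proof (rule nn_integral_mono)
    fix x
    have "ennreal (pmf p x) \<le> ennreal c * ennreal (pmf q x)"
      using assms by (simp add: ennreal_mult[symmetric] ennreal_leI)
    thus "ennreal (pmf p x) * f x \<le> ennreal c * (ennreal (pmf q x) * f x)"
      by (metis mult.assoc mult_right_mono zero_le)
  qed
  also have "\<dots> = ennreal c * (\<integral>\<^sup>+x. f x \<partial>measure_pmf q)"
    by (simp add: nn_integral_cmult nn_integral_measure_pmf)
  finally show ?thesis .
qed

lemma emeasure_le_scaled_bind_pmf:
  assumes "c \<ge> 0" "d \<ge> 0" "\<And>x. pmf p x \<le> c * pmf q x"
    and le: "\<And>x. emeasure_le_scaled d (K x) (L x)"
    and sub: "\<And>x. subprob_space (K x)" "\<And>x. subprob_space (L x)"
    and sets: "\<And>x. sets (K x) = sets \<Sigma>"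
  shows "emeasure_le_scaled (c * d) (measure_pmf p \<bind> K) (measure_pmf q \<bind> L)"
proof (rule emeasure_le_scaledI)
  have sets_L: "sets (L x) = sets \<Sigma>" for x using emeasure_le_scaledD(1)[OF le] sets by metis
  have K: "K \<in> measurable (measure_pmf p) (subprob_algebra \<Sigma>)"
    using sub sets by (auto simp: space_subprob_algebra)
  have L: "L \<in> measurable (measure_pmf q) (subprob_algebra \<Sigma>)"
    using sub sets_L by (auto simp: space_subprob_algebra)
  show "sets (measure_pmf p \<bind> K) = sets (measure_pmf q \<bind> L)"
    using sets sets_L by (simp add: sets_bind)
  fix S assume "S \<in> sets (measure_pmf p \<bind> K)"
  hence S: "S \<in> sets \<Sigma>" using sets by (simp add: sets_bind)
  have "emeasure (measure_pmf p \<bind> K) S = (\<integral>\<^sup>+x. emeasure (K x) S \<partial>measure_pmf p)"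
    by (rule emeasure_bind[OF _ K S]) simp
  also have "\<dots> \<le> (\<integral>\<^sup>+x. ennreal d * emeasure (L x) S \<partial>measure_pmf p)"
    using S sets by (intro nn_integral_mono emeasure_le_scaledD(2)[OF le]) auto
  also have "\<dots> = ennreal d * (\<integral>\<^sup>+x. emeasure (L x) S \<partial>measure_pmf p)"
    by (rule nn_integral_cmult) simp
  also have "\<dots> \<le> ennreal d * (ennreal c * (\<integral>\<^sup>+x. emeasure (L x) S \<partial>measure_pmf q))"
    by (intro mult_left_mono nn_integral_measure_pmf_le_scaled assms) simp
  also have "(\<integral>\<^sup>+x. emeasure (L x) S \<partial>measure_pmf q) = emeasure (measure_pmf q \<bind> L) S"
    by (rule emeasure_bind[OF _ L S, symmetric]) simp
  finally show "emeasure (measure_pmf p \<bind> K) S \<le> ennreal (c * d) * emeasure (measure_pmf q \<bind> L) S"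
    using assms(1,2) by (simp add: ennreal_mult mult_ac)
qed

lemma emeasure_le_scaled_measure_pmf:
  assumes "c \<ge> 0" "\<And>x. pmf p x \<le> c * pmf q x"
  shows "emeasure_le_scaled c (measure_pmf p) (measure_pmf q)"
  using nn_integral_measure_pmf_le_scaled[OF assms, of "indicator _"]
  by (intro emeasure_le_scaledI) simp_all

lemma prod_le_scaled_single_factor:
  fixes f g :: "'a \<Rightarrow> real"
  assumes "finite I" "c \<ge> 1" "\<And>j. j \<in> I \<Longrightarrow> j \<noteq> k \<Longrightarrow> f j = g j"
    "k \<in> I \<Longrightarrow> f k \<le> c * g k" "\<And>j. j \<in> I \<Longrightarrow> 0 \<le> f j" "\<And>j. j \<in> I \<Longrightarrow> 0 \<le> g j"
  shows "prod f I \<le> c * prod g I"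
proof (cases "k \<in> I")
  case True
  have rest: "prod f (I - {k}) = prod g (I - {k})" using assms(3) by (intro prod.cong) auto
  have "prod f I = f k * prod g (I - {k})" using True assms(1) rest by (simp add: prod.remove)
  also have "\<dots> \<le> (c * g k) * prod g (I - {k})"
    using assms(4,6) True by (intro mult_right_mono prod_nonneg) auto
  also have "\<dots> = c * prod g I" using True assms(1) by (simp add: prod.remove)
  finally show ?thesis .
next
  case False
  hence "prod f I = prod g I" using assms(3) by (intro prod.cong) auto
  moreover have "0 \<le> prod g I" using assms(6) by (rule prod_nonneg)
  ultimately show ?thesis using assms(2) by (simp add: mult_le_cancel_right1)
qed

lemma pmf_Pi_pmf_le_scaled:
  assumes "finite I" "c \<ge> 1" "\<And>j. j \<in> I \<Longrightarrow> j \<noteq> k \<Longrightarrow> p j = q j"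
    "\<And>x. pmf (p k) x \<le> c * pmf (q k) x"
  shows "pmf (Pi_pmf I d p) r \<le> c * pmf (Pi_pmf I d q) r"
  using assms by (auto simp: pmf_Pi intro!: prod_le_scaled_single_factor)

lemma exp_div_exp_plus_one_le_one: "exp (x :: real) / (exp x + 1) \<le> 1"
  by (simp add: divide_le_eq add_pos_pos)

lemma pmf_bernoulli_le_scaled:
  assumes "0 \<le> p" "p \<le> 1" "0 \<le> q" "q \<le> 1" "p \<le> c * q" "1 - p \<le> c * (1 - q)"
  shows "pmf (bernoulli_pmf p) x \<le> c * pmf (bernoulli_pmf q) x"
  using assms by (cases x) auto

lemma pmf_ARR_le_scaled:
  assumes "eps \<ge> 0" "0 \<le> \<mu>" "\<mu> \<le> exp eps / (exp eps + 1)"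
  shows "pmf (ARR eps \<mu> b) x \<le> exp eps * pmf (ARR eps \<mu> b') x"
proof -
  define E where "E = exp eps"
  have E: "E \<ge> 1" using assms(1) by (simp add: E_def)
  have \<rho>: "exp (- eps) = 1 / E" by (simp add: E_def exp_minus inverse_eq_divide)
  have \<mu>E: "\<mu> * (E + 1) \<le> E" using assms(3) E by (simp add: E_def le_divide_eq add_pos_pos)
  have \<mu>1: "\<mu> \<le> 1" using order_trans[OF assms(3) exp_div_exp_plus_one_le_one] .
  have \<mu>\<rho>: "\<mu> / E \<le> \<mu>" "0 \<le> \<mu> / E" using E assms(2) by (simp_all add: divide_le_eq mult_le_cancel_left1)
  txt \<open>The only ratio that needs the bound on mu: a non-edge reported as 0 versus an edge.\<close>
  have worst: "1 - \<mu> / E \<le> E * (1 - \<mu>)"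
  proof -
    have "(E - 1) * (\<mu> * (E + 1) - E) \<le> 0" using E \<mu>E by (intro mult_nonneg_nonpos) auto
    hence "E - \<mu> \<le> E * (E * (1 - \<mu>))" by (simp add: algebra_simps)
    hence "(E - \<mu>) / E \<le> E * (1 - \<mu>)" using E by (simp add: divide_le_eq mult.commute)
    thus ?thesis using E by (simp add: diff_divide_distrib)
  qed
  have grow: "x \<le> E * x" if "0 \<le> x" for x using E that by (simp add: mult_le_cancel_right1)
  show ?thesis unfolding ARR_def \<rho> E_def[symmetric]
    using assms(2) \<mu>1 \<mu>\<rho> worst grow[of \<mu>] grow[of "1 - \<mu> / E"] E
    by (intro pmf_bernoulli_le_scaled) auto
qed

definition laplace_density :: "real \<Rightarrow> real \<Rightarrow> real" where
  "laplace_density b x = exp (- \<bar>x\<bar> / b) / (2 * b)"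

lemma laplace_density_nonneg: "b \<ge> 0 \<Longrightarrow> 0 \<le> laplace_density b x"
  by (simp add: laplace_density_def)

lemma laplace_eq_density: "b \<noteq> 0 \<Longrightarrow> laplace b = density lborel (\<lambda>x. ennreal (laplace_density b x))"
  by (simp add: laplace_def laplace_density_def)

lemma nn_integral_laplace_density_nonneg:
  assumes b: "b > 0"
  shows "2 * (\<integral>\<^sup>+x. ennreal (laplace_density b x) * indicator {0..} x \<partial>lborel) = 1"
proof -
  let ?ed = "exponential_density (1/b)"
  interpret E: prob_space "density lborel ?ed"
    using b by (intro prob_space_exponential_density) simp
  have "2 * (\<integral>\<^sup>+x. ennreal (laplace_density b x) * indicator {0..} x \<partial>lborel)
      = (\<integral>\<^sup>+x. 2 * (ennreal (laplace_density b x) * indicator {0..} x) \<partial>lborel)"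
    by (rule nn_integral_cmult[symmetric]) (simp add: laplace_density_def)
  also have "\<dots> = (\<integral>\<^sup>+x. ennreal (?ed x) \<partial>lborel)"
  proof (rule nn_integral_cong)
    fix x :: real
    show "2 * (ennreal (laplace_density b x) * indicator {0..} x) = ennreal (?ed x)"
    proof (cases "x \<ge> 0")
      case True
      hence "?ed x = 2 * laplace_density b x"
        using b by (simp add: laplace_density_def exponential_density_def)
      thus ?thesis using True b by (simp add: ennreal_mult laplace_density_nonneg)
    qed (simp add: exponential_density_def)
  qed
  also have "\<dots> = 1"
    using E.emeasure_space_1 by (simp add: emeasure_density)
  finally show ?thesis .
qed

lemma prob_space_laplace:
  assumes "b \<ge> 0"
  shows "prob_space (laplace b)"
proof (cases "b = 0")
  case True
  thus ?thesis by (simp add: laplace_def prob_space_return)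
next
  case False
  with assms have b: "b > 0" by simp
  let ?f = "\<lambda>x. ennreal (laplace_density b x)"
  have [measurable]: "?f \<in> borel_measurable borel" by (simp add: laplace_density_def)
  have "(\<integral>\<^sup>+x. ?f x * indicator {..<0} x \<partial>lborel)
      = (\<integral>\<^sup>+x. (\<lambda>x. ?f x * indicator {..<0} x) (0 + (-1) * x) \<partial>lborel)"
    using nn_integral_real_affine[of "\<lambda>x. ?f x * indicator {..<0} x" "-1" 0] by simp
  also have "\<dots> = (\<integral>\<^sup>+x. ?f x * indicator {0..} x \<partial>lborel)"
    by (intro nn_integral_cong_AE eventually_mono[OF AE_lborel_singleton[of 0]])
       (auto simp: indicator_def laplace_density_def)
  finally have symmetric: "(\<integral>\<^sup>+x. ?f x * indicator {..<0} x \<partial>lborel)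
      = (\<integral>\<^sup>+x. ?f x * indicator {0..} x \<partial>lborel)" .
  have "(\<integral>\<^sup>+x. ?f x \<partial>lborel)
      = (\<integral>\<^sup>+x. ?f x * indicator {0..} x \<partial>lborel) + (\<integral>\<^sup>+x. ?f x * indicator {..<0} x \<partial>lborel)"
    by (subst nn_integral_add[symmetric]) (auto intro!: nn_integral_cong simp: indicator_def)
  also have "\<dots> = 1"
    unfolding symmetric using nn_integral_laplace_density_nonneg[OF b] by (simp add: mult_2)
  finally show ?thesis
    using b by (intro prob_spaceI) (simp add: laplace_eq_density emeasure_density)
qed

lemma distr_laplace_shift:
  assumes "b \<noteq> 0"
  shows "distr (laplace b) borel ((+) c) = density lborel (\<lambda>y. ennreal (laplace_density b (y - c)))"
proof -
  have [measurable]: "(\<lambda>x. ennreal (laplace_density b x)) \<in> borel_measurable borel"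
    by (simp add: laplace_density_def)
  have "laplace b = density (distr lborel borel ((+) (- c))) (\<lambda>x. ennreal (laplace_density b x))"
    using assms by (simp add: laplace_eq_density lborel_distr_plus)
  hence "distr (laplace b) borel ((+) c)
      = distr (density (distr lborel borel ((+) (- c))) (\<lambda>x. ennreal (laplace_density b x))) lborel ((+) c)"
    by (simp cong: distr_cong)
  also have "\<dots> = density lborel ((\<lambda>x. ennreal (laplace_density b x)) \<circ> (+) (- c))"
    by (rule distr_density_distr) auto
  finally show ?thesis by (simp add: o_def)
qed

lemma emeasure_le_scaled_laplace_shift:
  assumes "b \<ge> 0" "e \<ge> 0" "\<bar>c - c'\<bar> \<le> b * e"
  shows "emeasure_le_scaled (exp e) (distr (laplace b) borel ((+) c)) (distr (laplace b) borel ((+) c'))"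
proof (cases "b = 0")
  case True
  \<comment> \<open>point mass, the case dmax = 0\<close>
  with assms have "c = c'" by simp
  thus ?thesis using assms(2) by (simp add: emeasure_le_scaled_refl)
next
  case False
  with assms(1) have b: "b > 0" by simp
  have "ennreal (laplace_density b (y - c)) \<le> ennreal (exp e) * ennreal (laplace_density b (y - c'))" for y
  proof -
    have "\<bar>y - c'\<bar> - \<bar>y - c\<bar> \<le> b * e" using assms(3) by linarith
    hence "- \<bar>y - c\<bar> / b \<le> e + - \<bar>y - c'\<bar> / b"
      using b by (simp add: field_simps)
    hence "exp (- \<bar>y - c\<bar> / b) \<le> exp e * exp (- \<bar>y - c'\<bar> / b)"
      by (simp flip: exp_add)
    hence "laplace_density b (y - c) \<le> exp e * laplace_density b (y - c')"
      unfolding laplace_density_def times_divide_eq_right using b by (intro divide_right_mono) auto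
    thus ?thesis using b by (simp add: laplace_density_nonneg ennreal_leI flip: ennreal_mult)
  qed
  thus ?thesis unfolding distr_laplace_shift[OF False]
    by (intro emeasure_le_scaled_density) (auto simp: laplace_density_def)
qed

definition neighbor_pairs :: "nat \<Rightarrow> (nat \<Rightarrow> bool) \<Rightarrow> (nat \<times> nat) set" where
  "neighbor_pairs i a = {(j, k). j < k \<and> k < i \<and> a j \<and> a k}"

lemma finite_neighbor_pairs: "finite (neighbor_pairs i a)"
  by (rule finite_subset[of _ "{..<i} \<times> {..<i}"]) (auto simp: neighbor_pairs_def)

lemma neighbor_pairs_cong: "(\<And>j. j < i \<Longrightarrow> a j = a' j) \<Longrightarrow> neighbor_pairs i a = neighbor_pairs i a'"
  unfolding neighbor_pairs_def by auto

lemma w_val_neighbor_pairs: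
  "w_val v e \<mu> i a M = real (card (neighbor_pairs i a \<inter> M))
     - mu_star v \<mu> * exp (- e) * real (card (neighbor_pairs i a))"
proof -
  have "{(j, k). j < k \<and> k < i \<and> a j \<and> a k \<and> (j, k) \<in> M} = neighbor_pairs i a \<inter> M"
    by (auto simp: neighbor_pairs_def)
  thus ?thesis by (simp add: w_val_def t_count_def s_count_def neighbor_pairs_def)
qed

text \<open>A pair gained by changing bit k contains k and is determined by its other endpoint.\<close>
lemma card_neighbor_pairs_diff_le:
  assumes "i \<le> n" and agree: "\<And>j. j < i \<Longrightarrow> j \<noteq> k \<Longrightarrow> a j = a' j"
  shows "card (neighbor_pairs i a - neighbor_pairs i a') \<le> card {j. j < n \<and> a j}"
proof -
  let ?D = "neighbor_pairs i a - neighbor_pairs i a'"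
  have D: "j < l \<and> l < i \<and> a j \<and> a l \<and> (j = k \<or> l = k)" if "(j, l) \<in> ?D" for j l
    using that agree[of j] agree[of l] by (auto simp: neighbor_pairs_def)
  let ?other = "\<lambda>(j, l). if j = k then l else j"
  have "inj_on ?other ?D"
  proof (rule inj_onI)
    fix x y assume "x \<in> ?D" "y \<in> ?D" "?other x = ?other y"
    thus "x = y" using D[of "fst x" "snd x"] D[of "fst y" "snd y"]
      by (auto simp: case_prod_beta prod_eq_iff split: if_splits)
  qed
  moreover have "?other ` ?D \<subseteq> {j. j < n \<and> a j}"
    using D assms(1) by fastforce
  ultimately show ?thesis by (intro card_inj_on_le) auto
qed

lemma abs_card_Int_diff_le:
  fixes c :: real
  assumes "finite P" "finite Q" "0 \<le> c" "c \<le> 1"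
    and "card (P - Q) \<le> D" "card (Q - P) \<le> D"
  shows "\<bar>(card (P \<inter> M) - c * card P) - (card (Q \<inter> M) - c * card Q)\<bar> \<le> D"
proof -
  have split: "card X = card (X \<inter> Y) + card (X - Y)" "card (X \<inter> M) = card (X \<inter> Y \<inter> M) + card ((X - Y) \<inter> M)"
    if "finite X" for X Y
  proof -
    have "X \<inter> M \<inter> Y = X \<inter> Y \<inter> M" "X \<inter> M - Y = (X - Y) \<inter> M" by auto
    thus "card X = card (X \<inter> Y) + card (X - Y)"
      "card (X \<inter> M) = card (X \<inter> Y \<inter> M) + card ((X - Y) \<inter> M)"
      using card_Int_Diff[OF that, of Y] card_Int_Diff[of "X \<inter> M" Y] that by auto
  qed
  have mono: "card ((X - Y) \<inter> M) \<le> card (X - Y)" if "finite X" for X Y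
    using that by (intro card_mono) auto
  have "(1 - c) * card (P - Q) \<le> (1 - c) * D" "c * card (Q - P) \<le> c * D"
       "c * card (P - Q) \<le> c * D" "(1 - c) * card (Q - P) \<le> (1 - c) * D"
    using assms by (auto intro: mult_left_mono)
  thus ?thesis
    using split[OF assms(1), of Q] split[OF assms(2), of P] mono[OF assms(1), of Q] mono[OF assms(2), of P]
    by (simp add: Int_commute abs_le_iff algebra_simps)
qed

lemma w_val_sensitivity:
  assumes "i \<le> n" and agree: "\<And>j. j < i \<Longrightarrow> j \<noteq> k \<Longrightarrow> a j = a' j"
    and "card {j. j < n \<and> a j} \<le> d" "card {j. j < n \<and> a' j} \<le> d"
    and "0 \<le> \<mu>" "\<mu> \<le> 1" "e \<ge> 0"
  shows "\<bar>w_val v e \<mu> i a M - w_val v e \<mu> i a' M\<bar> \<le> d"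
proof -
  have "0 \<le> mu_star v \<mu>" "mu_star v \<mu> \<le> 1"
    using assms(5,6) by (cases v; simp add: mu_star_def power_le_one)+
  moreover have "0 < exp (- e)" "exp (- e) \<le> 1" using assms(7) by auto
  ultimately have "0 \<le> mu_star v \<mu> * exp (- e)" "mu_star v \<mu> * exp (- e) \<le> 1"
    using mult_mono[of "mu_star v \<mu>" 1 "exp (- e)" 1] by auto
  moreover have "card (neighbor_pairs i a - neighbor_pairs i a') \<le> d"
    using card_neighbor_pairs_diff_le[where a = a and a' = a' and k = k, OF assms(1) agree] assms(3)
    by linarith
  moreover have "card (neighbor_pairs i a' - neighbor_pairs i a) \<le> d"
    using card_neighbor_pairs_diff_le[where a = a' and a' = a and k = k, OF assms(1) agree[symmetric]] assms(4)
    by linarith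
  ultimately show ?thesis
    unfolding w_val_neighbor_pairs by (intro abs_card_Int_diff_le finite_neighbor_pairs) auto
qed

lemma pmf_round1_le_scaled:
  assumes "eps \<ge> 0" "0 \<le> \<mu>" "\<mu> \<le> exp eps / (exp eps + 1)"
    and "\<And>j. j < i \<Longrightarrow> j \<noteq> k \<Longrightarrow> a j = a' j"
  shows "pmf (round1 eps \<mu> i a) r \<le> exp eps * pmf (round1 eps \<mu> i a') r"
  unfolding round1_def
  using assms pmf_ARR_le_scaled[OF assms(1-3)] by (intro pmf_Pi_pmf_le_scaled[where k = k]) auto

lemma round1_cong:
  "(\<And>j. j < i \<Longrightarrow> a j = a' j) \<Longrightarrow> round1 eps \<mu> i a = round1 eps \<mu> i a'"
  unfolding round1_def by (intro Pi_pmf_cong) auto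

lemma round2_cong:
  "(\<And>j. j < i \<Longrightarrow> a j = a' j) \<Longrightarrow> round2 v eps1 eps2 \<mu> dmax i M a = round2 v eps1 eps2 \<mu> dmax i M a'"
  unfolding round2_def w_val_neighbor_pairs by (simp add: neighbor_pairs_cong[of i a a'])

lemma sets_round2: "sets (round2 v eps1 eps2 \<mu> dmax i M a) = sets borel"
  by (simp add: round2_def)

lemma prob_space_round2:
  "eps2 \<ge> 0 \<Longrightarrow> prob_space (round2 v eps1 eps2 \<mu> dmax i M a)"
  unfolding round2_def
  by (intro prob_space.prob_space_distr prob_space_laplace) (simp_all add: laplace_def)

lemma emeasure_le_scaled_round2:
  assumes "eps2 > 0" "\<bar>w_val v eps1 \<mu> i a M - w_val v eps1 \<mu> i a' M\<bar> \<le> dmax"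
  shows "emeasure_le_scaled (exp eps2) (round2 v eps1 eps2 \<mu> dmax i M a) (round2 v eps1 eps2 \<mu> dmax i M a')"
  unfolding round2_def using assms by (intro emeasure_le_scaled_laplace_shift) auto

lemma edge_LDP_user_rand:
  assumes "eps1 \<ge> 0" "eps2 > 0" "0 \<le> \<mu>" "\<mu> \<le> exp eps1 / (exp eps1 + 1)" "i < n"
  shows "edge_LDP n (eps1 + eps2) {a. card {j. j < n \<and> a j} \<le> dmax} (user_rand v eps1 eps2 \<mu> dmax i M)"
  unfolding edge_LDP_def
proof (intro ballI impI)
  fix a a' S
  assume "a \<in> {a. card {j. j < n \<and> a j} \<le> dmax}" "a' \<in> {a. card {j. j < n \<and> a j} \<le> dmax}"
    and "rows_differ_one n a a'" and S: "S \<in> sets (user_rand v eps1 eps2 \<mu> dmax i M a)"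
  hence deg: "card {j. j < n \<and> a j} \<le> dmax" "card {j. j < n \<and> a' j} \<le> dmax" by auto
  obtain k where "\<And>j. j < n \<Longrightarrow> j \<noteq> k \<Longrightarrow> a j = a' j"
    using \<open>rows_differ_one n a a'\<close> unfolding rows_differ_one_def by blast
  hence agree: "\<And>j. j < i \<Longrightarrow> j \<noteq> k \<Longrightarrow> a j = a' j" using \<open>i < n\<close> by simp
  have \<mu>1: "\<mu> \<le> 1" using order_trans[OF assms(4) exp_div_exp_plus_one_le_one] .
  let ?p = "round1 eps1 \<mu> i a" and ?p' = "round1 eps1 \<mu> i a'"
  let ?R = "round2 v eps1 eps2 \<mu> dmax i M a" and ?R' = "round2 v eps1 eps2 \<mu> dmax i M a'"
  have sigma_finite: "sigma_finite_measure (measure_pmf q)" "sigma_finite_measure ?R" "sigma_finite_measure ?R'"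
    for q :: "(nat \<Rightarrow> bool) pmf"
    using assms(2) by (auto intro!: prob_space_imp_sigma_finite prob_space_round2 prob_space_measure_pmf)
  have "emeasure_le_scaled (exp eps2) (measure_pmf ?p \<Otimes>\<^sub>M ?R) (measure_pmf ?p \<Otimes>\<^sub>M ?R')"
    using assms(1-3) \<mu>1 w_val_sensitivity[of i n k a a' dmax] \<open>i < n\<close> agree deg
    by (intro emeasure_le_scaled_pair_measure_right emeasure_le_scaled_round2 sigma_finite) auto
  moreover have "emeasure_le_scaled (exp eps1) (measure_pmf ?p \<Otimes>\<^sub>M ?R') (measure_pmf ?p' \<Otimes>\<^sub>M ?R')"
    using assms(1-4) agree
    by (intro emeasure_le_scaled_pair_measure_left emeasure_le_scaled_measure_pmf
        pmf_round1_le_scaled sigma_finite) auto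
  ultimately have "emeasure_le_scaled (exp (eps1 + eps2))
      (user_rand v eps1 eps2 \<mu> dmax i M a) (user_rand v eps1 eps2 \<mu> dmax i M a')"
    unfolding user_rand_def exp_add mult.commute[of "exp eps1"]
    by (rule emeasure_le_scaled_trans[rotated 2]) auto
  moreover have "finite_measure (user_rand v eps1 eps2 \<mu> dmax i M a')"
    unfolding user_rand_def using assms(2)
    by (intro prob_space.axioms(1) prob_space_pair prob_space_measure_pmf prob_space_round2) auto
  ultimately show "measure (user_rand v eps1 eps2 \<mu> dmax i M a) S
      \<le> exp (eps1 + eps2) * measure (user_rand v eps1 eps2 \<mu> dmax i M a') S"
    using S by (intro measure_le_scaled) auto
qed

definition lower_triangles_agree_except ::
    "nat \<Rightarrow> nat \<Rightarrow> nat \<Rightarrow> (nat \<Rightarrow> nat \<Rightarrow> bool) \<Rightarrow> (nat \<Rightarrow> nat \<Rightarrow> bool) \<Rightarrow> bool" where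
  "lower_triangles_agree_except n h l A A' \<longleftrightarrow>
     h < n \<and> (\<forall>i<n. \<forall>j<i. (i, j) \<noteq> (h, l) \<longrightarrow> A i j = A' i j)"

text \<open>Round 1 only reports the entries a_(i,j) with j < i, so an edge is seen only in the row
  of its larger endpoint.\<close>
lemma graphs_differ_one_edge_imp_lower_triangles_agree_except:
  assumes "graphs_differ_one_edge n A A'"
  shows "\<exists>h l. lower_triangles_agree_except n h l A A'"
proof -
  obtain u w where uw: "u < n" "w < n"
    and "\<forall>i<n. \<forall>j<n. {i, j} \<noteq> {u, w} \<longrightarrow> A i j = A' i j"
    using assms unfolding graphs_differ_one_edge_def by (elim exE conjE) (rule that)
  hence other: "\<And>i j. i < n \<Longrightarrow> j < n \<Longrightarrow> {i, j} \<noteq> {u, w} \<Longrightarrow> A i j = A' i j" by blast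
  have "\<forall>i<n. \<forall>j<i. (i, j) \<noteq> (max u w, min u w) \<longrightarrow> A i j = A' i j"
    by (intro allI impI other) (auto simp: doubleton_eq_iff)
  thus ?thesis using uw unfolding lower_triangles_agree_except_def
    by (intro exI[of _ "max u w"] exI[of _ "min u w"]) simp
qed

definition round1_reports :: "real \<Rightarrow> real \<Rightarrow> nat \<Rightarrow> (nat \<Rightarrow> nat \<Rightarrow> bool) \<Rightarrow> (nat \<Rightarrow> nat \<Rightarrow> bool) pmf" where
  "round1_reports eps1 \<mu> n A = Pi_pmf {..<n} (\<lambda>_. False) (\<lambda>i. round1 eps1 \<mu> i (A i))"

definition transcripts :: "nat \<Rightarrow> ((nat \<Rightarrow> nat \<Rightarrow> bool) \<times> (nat \<Rightarrow> real)) measure" where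
  "transcripts n = count_space UNIV \<Otimes>\<^sub>M PiM {..<n} (\<lambda>_. borel)"

definition round2_answers :: "variant \<Rightarrow> real \<Rightarrow> real \<Rightarrow> real \<Rightarrow> nat \<Rightarrow> nat \<Rightarrow> (nat \<Rightarrow> nat \<Rightarrow> bool)
    \<Rightarrow> (nat \<Rightarrow> nat \<Rightarrow> bool) \<Rightarrow> nat \<Rightarrow> real measure" where
  "round2_answers v eps1 eps2 \<mu> dmax n A r i =
     round2 v eps1 eps2 \<mu> dmax i (message v i (noisy_edges n r)) (A i)"

definition transcript_given_reports :: "variant \<Rightarrow> real \<Rightarrow> real \<Rightarrow> real \<Rightarrow> nat \<Rightarrow> nat
    \<Rightarrow> (nat \<Rightarrow> nat \<Rightarrow> bool) \<Rightarrow> (nat \<Rightarrow> nat \<Rightarrow> bool) \<Rightarrow> ((nat \<Rightarrow> nat \<Rightarrow> bool) \<times> (nat \<Rightarrow> real)) measure" where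
  "transcript_given_reports v eps1 eps2 \<mu> dmax n A r =
     distr (PiM {..<n} (round2_answers v eps1 eps2 \<mu> dmax n A r)) (transcripts n) (Pair r)"

lemma protocol_eq_bind:
  "protocol v eps1 eps2 \<mu> dmax n A =
     measure_pmf (round1_reports eps1 \<mu> n A) \<bind> transcript_given_reports v eps1 eps2 \<mu> dmax n A"
  unfolding protocol_def round1_reports_def transcript_given_reports_def round2_answers_def transcripts_def ..

lemma measurable_Pair_transcripts:
  "Pair r \<in> measurable (PiM {..<n} (round2_answers v eps1 eps2 \<mu> dmax n A r)) (transcripts n)"
proof -
  have "sets (PiM {..<n} (round2_answers v eps1 eps2 \<mu> dmax n A r)) = sets (PiM {..<n} (\<lambda>_. borel))"
    unfolding round2_answers_def by (intro sets_PiM_cong) (simp_all add: sets_round2)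
  thus ?thesis unfolding transcripts_def
    by (intro measurable_Pair measurable_const measurable_ident_sets) auto
qed

lemma prob_space_transcript_given_reports:
  "eps2 \<ge> 0 \<Longrightarrow> prob_space (transcript_given_reports v eps1 eps2 \<mu> dmax n A r)"
  unfolding transcript_given_reports_def
  by (intro prob_space.prob_space_distr prob_space_PiM measurable_Pair_transcripts)
     (simp add: round2_answers_def prob_space_round2)

lemma sets_transcript_given_reports:
  "sets (transcript_given_reports v eps1 eps2 \<mu> dmax n A r) = sets (transcripts n)"
  by (simp add: transcript_given_reports_def)

lemma pmf_round1_reports_le_scaled:
  assumes "eps1 \<ge> 0" "0 \<le> \<mu>" "\<mu> \<le> exp eps1 / (exp eps1 + 1)"
    and "lower_triangles_agree_except n h l A A'"
  shows "pmf (round1_reports eps1 \<mu> n A) r \<le> exp eps1 * pmf (round1_reports eps1 \<mu> n A') r"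
  unfolding round1_reports_def using assms
  by (intro pmf_Pi_pmf_le_scaled[where k = h] round1_cong pmf_round1_le_scaled[where k = l])
     (auto simp: lower_triangles_agree_except_def)

lemma emeasure_le_scaled_transcript_given_reports:
  assumes "eps1 \<ge> 0" "eps2 > 0" "0 \<le> \<mu>" "\<mu> \<le> 1"
    and agree: "lower_triangles_agree_except n h l A A'"
    and "max_deg_le n dmax A" "max_deg_le n dmax A'"
  shows "emeasure_le_scaled (exp eps2)
    (transcript_given_reports v eps1 eps2 \<mu> dmax n A r) (transcript_given_reports v eps1 eps2 \<mu> dmax n A' r)"
  unfolding transcript_given_reports_def
proof (intro emeasure_le_scaled_distr emeasure_le_scaled_PiM_single[where k = h] measurable_Pair_transcripts)
  show "round2_answers v eps1 eps2 \<mu> dmax n A r i = round2_answers v eps1 eps2 \<mu> dmax n A' r i"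
    if "i \<in> {..<n}" "i \<noteq> h" for i
    unfolding round2_answers_def using that agree
    by (intro round2_cong) (auto simp: lower_triangles_agree_except_def)
  show "emeasure_le_scaled (exp eps2)
    (round2_answers v eps1 eps2 \<mu> dmax n A r h) (round2_answers v eps1 eps2 \<mu> dmax n A' r h)"
    unfolding round2_answers_def using assms
    by (intro emeasure_le_scaled_round2 w_val_sensitivity[where k = l and n = n])
       (auto simp: lower_triangles_agree_except_def max_deg_le_def)
qed (use agree assms(2) in \<open>auto simp: lower_triangles_agree_except_def round2_answers_def prob_space_round2\<close>)

lemma relationship_DP_protocol:
  assumes "eps1 \<ge> 0" "eps2 > 0" "0 \<le> \<mu>" "\<mu> \<le> exp eps1 / (exp eps1 + 1)"
  shows "relationship_DP n dmax (eps1 + eps2) (protocol v eps1 eps2 \<mu> dmax n)"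
  unfolding relationship_DP_def
proof (intro allI impI ballI, elim conjE)
  fix A A' :: "nat \<Rightarrow> nat \<Rightarrow> bool" and S
  assume deg: "max_deg_le n dmax A" "max_deg_le n dmax A'" and "graphs_differ_one_edge n A A'"
    and S: "S \<in> sets (protocol v eps1 eps2 \<mu> dmax n A)"
  then obtain h l where agree: "lower_triangles_agree_except n h l A A'"
    using graphs_differ_one_edge_imp_lower_triangles_agree_except by blast
  let ?K = "transcript_given_reports v eps1 eps2 \<mu> dmax n"
  have prob_K: "prob_space (?K X r)" for X r
    using assms(2) by (intro prob_space_transcript_given_reports) simp
  have "emeasure_le_scaled (exp eps1 * exp eps2)
      (protocol v eps1 eps2 \<mu> dmax n A) (protocol v eps1 eps2 \<mu> dmax n A')"
    unfolding protocol_eq_bind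
    using assms order_trans[OF assms(4) exp_div_exp_plus_one_le_one] agree deg
    by (intro emeasure_le_scaled_bind_pmf[where \<Sigma> = "transcripts n"] pmf_round1_reports_le_scaled
        emeasure_le_scaled_transcript_given_reports sets_transcript_given_reports)
       (auto simp: prob_K prob_space_imp_subprob_space)
  moreover have "prob_space (protocol v eps1 eps2 \<mu> dmax n A')"
    unfolding protocol_eq_bind
    by (intro measure_pmf.prob_space_bind[where S = "transcripts n"] AE_I2 prob_K)
       (auto simp: measurable_def space_subprob_algebra prob_space_imp_subprob_space
         prob_K sets_transcript_given_reports)
  ultimately show "measure (protocol v eps1 eps2 \<mu> dmax n A) S
      \<le> exp (eps1 + eps2) * measure (protocol v eps1 eps2 \<mu> dmax n A') S"
    using S unfolding exp_add by (intro measure_le_scaled) (auto simp: prob_space_def)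
qed

theorem theorem4p1:
  fixes v :: variant and n dmax :: nat and eps1 eps2 \<mu> :: real
  assumes "eps1 \<ge> 0" and "eps2 > 0"
    and "0 \<le> \<mu>" and "\<mu> \<le> exp eps1 / (exp eps1 + 1)"
  shows "(\<forall>i<n. \<forall>M. edge_LDP n (eps1 + eps2) {ai. card {j. j < n \<and> ai j} \<le> dmax}
                       (user_rand v eps1 eps2 \<mu> dmax i M))
         \<and> relationship_DP n dmax (eps1 + eps2) (protocol v eps1 eps2 \<mu> dmax n)"
  using edge_LDP_user_rand[OF assms] relationship_DP_protocol[OF assms] by blast

end
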